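(* For $a,b\in G$, the ideal $\{a^{-1}b^{-1}ab\}^\#$ of $\kappa G^\#$ equals the ideal generated by $\{[\vec a,\vec b]\cdot\vec c : \vec c\in\Lambda_G\}$.
   Context: Let $\kappa$ be a field of characteristic $0$ and $G$ a group. Let $*:\kappa G\to\kappa G$ be the $\kappa$-linear map with $g^*=g^{-1}$, $(\kappa G)^*$ its fixed points, and $A_G$ the quotient of $\kappa G$ by the two-sided ideal generated by all $ab-ba$, $a\in\kappa G$, $b\in(\kappa G)^*$; $*$ descends to $A_G$. $\kappa G^\#=\{x\in A_G:x^*=x\}$, $\Lambda_G=\{x\in A_G:x^*=-x\}$; group elements are identified with their images in $A_G$; $\bar x=\tfrac12(x+x^* )$, $\vec x=\tfrac12(x-x^* )$. For $\vec x,\vec y\in\Lambda_G$: $\vec x\cdot\vec y=-\tfrac12(\vec x\vec y+\vec y\vec x)$, $[\vec x,\vec y]=\tfrac12(\vec x\vec y-\vec y\vec x)$. For $L\subset G$, $L^\#$ is the ideal of $\kappa G^\#$ generated by $\{\overline{xl}-\bar x:x\in A_G,l\in L\}$. *)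

theory Defs
  imports "HOL-Library.Poly_Mapping"
begin

text \<open>
  The group G is a type of class group_add (written additively, NOT assumed
  commutative; the group law g h is written g + h, the inverse g^-1 is -g,
  the neutral element is 0).  The group algebra kG is the monoid algebra
  (poly_mapping 'g 'k) of finitely supported functions with convolution product;
  the group element g is identified with Poly_Mapping.single g 1.
\<close>

type_synonym ('g, 'k) grpalg = "'g \<Rightarrow>\<^sub>0 'k"

definition grp :: "'g::group_add \<Rightarrow> ('g, 'k::field_char_0) grpalg" where
  "grp g = Poly_Mapping.single g 1"

definition star :: "('g::group_add, 'k::field_char_0) grpalg \<Rightarrow> ('g, 'k) grpalg" where
  "star x = Poly_Mapping.map_key uminus x"

definition half :: "('g::group_add, 'k::field_char_0) grpalg \<Rightarrow> ('g, 'k) grpalg" where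
  "half x = Poly_Mapping.map (\<lambda>c. c / 2) x"

inductive_set ideal2 :: "'a::ring set \<Rightarrow> 'a set" for S where
  zero: "0 \<in> ideal2 S"
| gen: "s \<in> S \<Longrightarrow> s \<in> ideal2 S"
| add: "x \<in> ideal2 S \<Longrightarrow> y \<in> ideal2 S \<Longrightarrow> x + y \<in> ideal2 S"
| mult: "x \<in> ideal2 S \<Longrightarrow> r * x * t \<in> ideal2 S"

text \<open>The ideal of kG defining A_G: generated by all ab - ba with b* = b.\<close>
definition IG :: "('g::group_add, 'k::field_char_0) grpalg set" where
  "IG = ideal2 {a * b - b * a | a b. star b = b}"

text \<open>A_G is kG / IG; the quotient map sends x to its coset.\<close>
definition piG :: "('g::group_add, 'k::field_char_0) grpalg \<Rightarrow> ('g, 'k) grpalg set" where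
  "piG x = {y. y - x \<in> IG}"

text \<open>Representatives (in kG) of the elements of kG^# (star-fixed elements
  of A_G) and of Lambda_G (star-antifixed elements of A_G).  Since star
  descends to A_G, piG x is star-fixed iff star x - x \<in> IG.\<close>
definition SymRep :: "('g::group_add, 'k::field_char_0) grpalg set" where
  "SymRep = {x. star x - x \<in> IG}"

definition AntiRep :: "('g::group_add, 'k::field_char_0) grpalg set" where
  "AntiRep = {x. star x + x \<in> IG}"

definition bar :: "('g::group_add, 'k::field_char_0) grpalg \<Rightarrow> ('g, 'k) grpalg" where
  "bar x = half (x + star x)"

definition vecp :: "('g::group_add, 'k::field_char_0) grpalg \<Rightarrow> ('g, 'k) grpalg" where
  "vecp x = half (x - star x)"

definition dotp :: "('g::group_add, 'k::field_char_0) grpalg \<Rightarrow> ('g, 'k) grpalg \<Rightarrow> ('g, 'k) grpalg" where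
  "dotp x y = - half (x * y + y * x)"

definition brk :: "('g::group_add, 'k::field_char_0) grpalg \<Rightarrow> ('g, 'k) grpalg \<Rightarrow> ('g, 'k) grpalg" where
  "brk x y = half (x * y - y * x)"

text \<open>The ideal of the (commutative) ring kG^# generated by the image of a set
  S of representatives: all finite sums  \<Sum> r_i s_i  with r_i \<in> kG^#, s_i \<in> S,
  taken as a set of elements of A_G (cosets).\<close>
definition sharp_ideal :: "('g::group_add, 'k::field_char_0) grpalg set \<Rightarrow> ('g, 'k) grpalg set set" where
  "sharp_ideal S = piG ` {sum_list (map (\<lambda>(r, s). r * s) rs) | rs.
       \<forall>(r, s) \<in> set rs. r \<in> SymRep \<and> s \<in> S}"

definition Lsharp :: "'g::group_add set \<Rightarrow> ('g, 'k::field_char_0) grpalg set set" where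
  "Lsharp L = sharp_ideal {bar (x * grp l) - bar x | x l. l \<in> L}"

end

theory Submission
  imports Defs
begin

(*
  Work with representatives in the group algebra kG and with
  congruence modulo the ideal IG defining A_G.  The involution star is an
  anti-automorphism of kG preserving IG, so every x splits as x = bar x + vecp x
  into a star-symmetric and a star-antisymmetric part, and star-symmetric
  elements are central modulo IG.

  For a commutator l = a^-1 b^-1 a b write x = y b a, so that
  x l - x = y (ab - ba).  Modulo IG, ab - ba only keeps the product of the
  vector parts, ab - ba == vecp a vecp b - vecp b vecp a = 2 [vecp a, vecp b],
  and taking the symmetric part of y W for antisymmetric W only keeps
  vecp y W + W vecp y.  Hence the generators of the two ideals agree up to the
  unit -2 of kG^#:
     bar (x l) - bar x  ==  -2 * ([vecp a, vecp b] . vecp (x a^-1 b^-1)),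
  and conversely every [vecp a, vecp b] . c with c antisymmetric arises this
  way (taking x = c b a, and c == vecp c).  A general comparison lemma for
  ideals of kG^# generated by sets of representatives then gives both
  inclusions.
*)

section \<open>The involution on the group algebra\<close>

lemma poly_mapping_single_induct:
  fixes x :: "'a \<Rightarrow>\<^sub>0 'b::monoid_add"
  assumes "P 0" "\<And>p k c. P p \<Longrightarrow> P (p + Poly_Mapping.single k c)"
  shows "P x"
proof (induction x rule: Poly_Mapping.update_induct)
  case const then show ?case using assms(1) by simp
next
  case (update f a b)
  have "Poly_Mapping.update a b f = f + Poly_Mapping.single a b"
    using update(1)
    by (intro poly_mapping_eqI) (auto simp: lookup_add lookup_update lookup_single when_def in_keys_iff)
  then show ?case using assms(2)[OF update(3)] by simp
qed

lemma inj_uminus_group: "inj (uminus :: 'g::group_add \<Rightarrow> 'g)"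
  by (simp add: inj_on_def)

lemma star_add: "star (x + y :: ('g::group_add, 'k::field_char_0) grpalg) = star x + star y"
  unfolding star_def by (rule map_key_plus[OF inj_uminus_group])

lemma star_zero [simp]: "star (0 :: ('g::group_add, 'k::field_char_0) grpalg) = 0"
  unfolding star_def by (rule map_key_zero[OF inj_uminus_group])

lemma star_single [simp]:
  "star (Poly_Mapping.single g c :: ('g::group_add, 'k::field_char_0) grpalg) = Poly_Mapping.single (-g) c"
  unfolding star_def using map_key_single[OF inj_uminus_group, of "-g" c] by simp

lemma star_uminus: "star (- x :: ('g::group_add, 'k::field_char_0) grpalg) = - star x"
  by (metis star_add star_zero add.right_inverse add_eq_0_iff)

lemma star_diff: "star (x - y :: ('g::group_add, 'k::field_char_0) grpalg) = star x - star y"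
  by (simp only: diff_conv_add_uminus star_add star_uminus)

lemma star_one [simp]: "star (1 :: ('g::group_add, 'k::field_char_0) grpalg) = 1"
  using star_single[of 0 1] by simp

lemma star_two: "star (2 :: ('g::group_add, 'k::field_char_0) grpalg) = 2"
  using star_add[of 1 1] by simp

text \<open>Star reverses products; by bilinearity it suffices to check it on monomials.\<close>
lemma star_mult_monomials:
  "star (Poly_Mapping.single k d * Poly_Mapping.single g c :: ('g::group_add, 'k::field_char_0) grpalg)
     = Poly_Mapping.single (-g) c * Poly_Mapping.single (-k) d"
proof -
  have "star (Poly_Mapping.single k d * Poly_Mapping.single g c :: ('g, 'k) grpalg)
      = Poly_Mapping.single (- (k + g)) (d * c)"
    by (simp only: mult_single star_single)
  also have "\<dots> = Poly_Mapping.single (-g + -k) (c * d)"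
    by (simp only: minus_add mult.commute[of d c])
  finally show ?thesis by (simp only: mult_single)
qed

lemma star_mult_single:
  "star (x * Poly_Mapping.single g c :: ('g::group_add, 'k::field_char_0) grpalg)
     = Poly_Mapping.single (-g) c * star x"
proof (induction x rule: poly_mapping_single_induct)
  case 1 then show ?case by simp
next
  case (2 p k d)
  then show ?case
    by (simp only: distrib_right distrib_left star_add star_mult_monomials star_single)
qed

lemma star_mult: "star (x * y :: ('g::group_add, 'k::field_char_0) grpalg) = star y * star x"
proof (induction y rule: poly_mapping_single_induct)
  case 1 then show ?case by simp
next
  case (2 p k d)
  then show ?case
    by (simp only: distrib_left distrib_right star_add star_mult_single star_single)
qed

lemma star_star [simp]: "star (star x :: ('g::group_add, 'k::field_char_0) grpalg) = x"
proof -
  have "star (star x) = Poly_Mapping.map_key (uminus \<circ> uminus) x"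
    unfolding star_def by (rule map_key_compose[OF inj_uminus_group inj_uminus_group])
  also have "uminus \<circ> uminus = (\<lambda>x::'g. x)" by auto
  finally show ?thesis by (simp add: map_key_id)
qed

text \<open>Halving is multiplication by the central, star-fixed element 1/2 of kG.\<close>
definition one_half :: "('g::group_add, 'k::field_char_0) grpalg" where
  "one_half = Poly_Mapping.single 0 (1/2)"

lemma half_eq_one_half_mult: "half x = one_half * (x :: ('g::group_add, 'k::field_char_0) grpalg)"
proof -
  have "(\<lambda>c::'k. c / 2) = (*) (1/2)" by (rule ext) simp
  then show ?thesis unfolding half_def one_half_def by (simp only: mult_map_scale_conv_mult)
qed

lemma single_zero_central:
  "Poly_Mapping.single 0 c * x = x * (Poly_Mapping.single 0 c :: ('g::group_add, 'k::field_char_0) grpalg)"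
proof (induction x rule: poly_mapping_single_induct)
  case 1 then show ?case by simp
next
  case (2 p k d)
  have "Poly_Mapping.single 0 c * Poly_Mapping.single k d
      = (Poly_Mapping.single k d * Poly_Mapping.single 0 c :: ('g, 'k) grpalg)"
    by (simp only: mult_single add_0_left add_0_right mult.commute[of c d])
  with 2 show ?case by (simp only: distrib_left distrib_right)
qed

lemma one_half_central: "one_half * x = x * one_half"
  unfolding one_half_def by (rule single_zero_central)

lemma one_half_add_one_half: "one_half + one_half = (1 :: ('g::group_add, 'k::field_char_0) grpalg)"
  unfolding one_half_def by (simp flip: single_add)

lemma star_one_half [simp]: "star one_half = one_half"
  unfolding one_half_def by simp

lemma star_one_half_mult: "star (one_half * x) = one_half * star x"
  by (simp add: star_mult one_half_central)

lemma one_half_mult_double: "one_half * x + one_half * x = x"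
  by (simp only: distrib_right[symmetric] one_half_add_one_half mult_1_left)

lemma one_half_mult_two: "one_half * (2 * x) = x"
  by (simp only: mult.assoc[symmetric] mult_2_right one_half_add_one_half mult_1_left)

lemma two_mult_one_half: "2 * (one_half * x) = x"
  by (simp only: mult.assoc[symmetric] mult_2 one_half_add_one_half mult_1_left)

section \<open>The ideal IG\<close>

lemma IG_zero [simp]: "0 \<in> IG" unfolding IG_def by (rule ideal2.zero)
lemma IG_add: "x \<in> IG \<Longrightarrow> y \<in> IG \<Longrightarrow> x + y \<in> IG" unfolding IG_def by (rule ideal2.add)
lemma IG_mult: "x \<in> IG \<Longrightarrow> r * x * t \<in> IG" unfolding IG_def by (rule ideal2.mult)
lemma IG_lmult: "x \<in> IG \<Longrightarrow> r * x \<in> IG" using IG_mult[of x r 1] by simp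
lemma IG_rmult: "x \<in> IG \<Longrightarrow> x * t \<in> IG" using IG_mult[of x 1 t] by simp
lemma IG_uminus: "x \<in> IG \<Longrightarrow> - x \<in> IG" using IG_lmult[of x "-1"] by simp
lemma IG_diff: "x \<in> IG \<Longrightarrow> y \<in> IG \<Longrightarrow> x - y \<in> IG"
  unfolding diff_conv_add_uminus by (intro IG_add IG_uminus)

lemma IG_commutator: "star s = s \<Longrightarrow> z * s - s * z \<in> IG"
  unfolding IG_def by (rule ideal2.gen) blast

lemma IG_commutator': "star s = s \<Longrightarrow> s * z - z * s \<in> IG"
  using IG_uminus[OF IG_commutator] by simp

text \<open>IG is star-stable, which is why star descends to A_G.\<close>
lemma IG_star: "x \<in> IG \<Longrightarrow> star x \<in> IG"
  unfolding IG_def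
proof (induction x rule: ideal2.induct)
  case zero then show ?case by (simp add: ideal2.zero)
next
  case (gen s)
  then obtain a b where ab: "s = a * b - b * a" "star b = b" by blast
  have "star s = - (star a * b - b * star a)" using ab by (simp add: star_diff star_mult)
  then show ?case using IG_uminus[OF IG_commutator[OF ab(2), of "star a"]] unfolding IG_def by simp
next
  case (add x y) then show ?case by (simp add: star_add ideal2.add)
next
  case (mult x r t)
  then show ?case using ideal2.mult[of "star x" _ "star t" "star r"] by (simp add: star_mult mult.assoc)
qed

lemma piG_eq: "x - y \<in> IG \<Longrightarrow> piG x = piG y"
  unfolding piG_def
proof (intro Collect_cong iffI)
  fix z assume xy: "x - y \<in> IG"
  { assume "z - x \<in> IG" then show "z - y \<in> IG" using IG_add[OF _ xy] by fastforce }
  { assume "z - y \<in> IG" then show "z - x \<in> IG" using IG_diff[OF _ xy] by fastforce }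
qed

section \<open>Symmetric and antisymmetric parts\<close>

lemma bar_eq: "bar x = one_half * (x + star x)"
  unfolding bar_def half_eq_one_half_mult ..

lemma vecp_eq: "vecp x = one_half * (x - star x)"
  unfolding vecp_def half_eq_one_half_mult ..

lemma star_bar: "star (bar x) = bar x"
  unfolding bar_eq star_one_half_mult by (simp add: star_add add.commute)

lemma star_vecp: "star (vecp x) = - vecp x"
  unfolding vecp_eq star_one_half_mult by (simp add: star_diff algebra_simps)

lemma bar_plus_vecp: "x = bar x + vecp x"
proof -
  have "(x + star x) + (x - star x) = x + x" by (simp add: algebra_simps)
  then have "one_half * (x + star x) + one_half * (x - star x) = one_half * x + one_half * x"
    by (simp only: distrib_left[symmetric])
  then show ?thesis unfolding bar_eq vecp_eq by (simp only: one_half_mult_double)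
qed

lemma bar_diff: "bar x - bar y = bar (x - y)"
  unfolding bar_eq by (simp add: star_diff algebra_simps)

lemma bar_cong: "x - y \<in> IG \<Longrightarrow> bar x - bar y \<in> IG"
proof -
  assume "x - y \<in> IG"
  then have "x - y + star (x - y) \<in> IG" by (intro IG_add IG_star)
  then show ?thesis unfolding bar_diff unfolding bar_eq by (rule IG_lmult)
qed

text \<open>Elements that are star-symmetric modulo IG (representatives of kG^#) are
  central modulo IG: split s into its symmetric part and a part lying in IG.\<close>
lemma SymRep_central: "s \<in> SymRep \<Longrightarrow> z * s - s * z \<in> IG"
proof -
  assume "s \<in> SymRep"
  then have "vecp s \<in> IG"
    unfolding SymRep_def vecp_eq using IG_lmult IG_uminus by fastforce
  moreover have "z * s - s * z = (z * bar s - bar s * z) + (z * vecp s - vecp s * z)"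
    by (subst (1 2) bar_plus_vecp) (simp add: algebra_simps)
  ultimately show ?thesis
    by (simp only:) (intro IG_add IG_commutator[OF star_bar] IG_diff IG_lmult IG_rmult)
qed

lemma SymRep_mult: "r1 \<in> SymRep \<Longrightarrow> r2 \<in> SymRep \<Longrightarrow> r1 * r2 \<in> SymRep"
proof -
  assume a1: "r1 \<in> SymRep" and a2: "r2 \<in> SymRep"
  have i1: "star r1 - r1 \<in> IG" and i2: "star r2 - r2 \<in> IG" using a1 a2 unfolding SymRep_def by auto
  have "star (r1 * r2) - r1 * r2 = (star r2 - r2) * star r1 + r2 * (star r1 - r1) + (r2 * r1 - r1 * r2)"
    by (simp add: star_mult algebra_simps)
  then show ?thesis unfolding SymRep_def mem_Collect_eq
    by (simp only:) (intro IG_add IG_rmult[OF i2] IG_lmult[OF i1] SymRep_central[OF a1])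
qed

lemma AntiRep_vecp: "c \<in> AntiRep \<Longrightarrow> c - vecp c \<in> IG"
proof -
  assume "c \<in> AntiRep"
  moreover have "c - vecp c = one_half * (star c + c)"
    unfolding vecp_eq by (simp add: algebra_simps one_half_mult_double)
  ultimately show ?thesis using IG_lmult unfolding AntiRep_def by auto
qed

lemma dotp_cong_right: "c - c' \<in> IG \<Longrightarrow> dotp w c - dotp w c' \<in> IG"
proof -
  assume cc: "c - c' \<in> IG"
  have "dotp w c - dotp w c' = - (one_half * (w * (c - c') + (c - c') * w))"
    unfolding dotp_def half_eq_one_half_mult by (simp add: algebra_simps)
  then show ?thesis using IG_uminus IG_lmult IG_add IG_lmult[OF cc] IG_rmult[OF cc] by metis
qed

section \<open>Comparing ideals of kG^#\<close>

lemma sharp_ideal_mono: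
  assumes "\<forall>s\<in>S1. \<exists>r s'. r \<in> SymRep \<and> s' \<in> S2 \<and> s - r * s' \<in> IG"
  shows "sharp_ideal S1 \<subseteq> sharp_ideal S2"
proof
  from assms obtain f g
    where fg: "\<And>s. s \<in> S1 \<Longrightarrow> f s \<in> SymRep \<and> g s \<in> S2 \<and> s - f s * g s \<in> IG"
    by metis
  let ?eval = "\<lambda>rs. sum_list (map (\<lambda>(r, s). r * s) rs)"
  fix X assume "X \<in> sharp_ideal S1"
  then obtain rs where X: "X = piG (?eval rs)" and rs: "\<forall>(r, s) \<in> set rs. r \<in> SymRep \<and> s \<in> S1"
    unfolding sharp_ideal_def by blast
  define rs' where "rs' = map (\<lambda>(r, s). (r * f s, g s)) rs"
  have rs': "\<forall>(r, s) \<in> set rs'. r \<in> SymRep \<and> s \<in> S2"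
    using rs fg SymRep_mult unfolding rs'_def by fastforce
  have "?eval rs - ?eval rs' \<in> IG"
    using rs unfolding rs'_def
  proof (induction rs)
    case Nil then show ?case by simp
  next
    case (Cons p rs)
    obtain r s where p: "p = (r, s)" by force
    with Cons.prems have "r * (s - f s * g s) \<in> IG" using fg IG_lmult by auto
    moreover have "?eval rs - ?eval (map (\<lambda>(r, s). (r * f s, g s)) rs) \<in> IG"
      using Cons by auto
    ultimately show ?case using IG_add unfolding p by (fastforce simp: algebra_simps)
  qed
  then have "X = piG (?eval rs')" using X piG_eq by metis
  then show "X \<in> sharp_ideal S2" unfolding sharp_ideal_def using rs' by blast
qed

lemma commutator_vector_parts:
  "A * B - B * A - (vecp A * vecp B - vecp B * vecp A) \<in> IG"
proof -
  have "A * B - B * A - (vecp A * vecp B - vecp B * vecp A)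
      = (bar A * bar B - bar B * bar A) - (vecp B * bar A - bar A * vecp B)
        + (vecp A * bar B - bar B * vecp A)"
    by (subst (1 2) bar_plus_vecp[of A], subst (1 2) bar_plus_vecp[of B]) (simp add: algebra_simps)
  then show ?thesis by (simp only:) (intro IG_add IG_diff IG_commutator star_bar)
qed

lemma bar_mult_antisym:
  assumes W: "star W = - W"
  shows "bar (y * W) - one_half * (vecp y * W + W * vecp y) \<in> IG"
proof -
  have "y * W + star (y * W) = (bar y * W - W * bar y) + (vecp y * W + W * vecp y)"
    unfolding star_mult W
    by (subst (1 2) bar_plus_vecp[of y]) (simp add: star_add star_bar star_vecp algebra_simps)
  then have "bar (y * W) - one_half * (vecp y * W + W * vecp y) = one_half * (bar y * W - W * bar y)"
    unfolding bar_eq[of "y * W"] by (simp only: right_diff_distrib[symmetric] add_diff_cancel)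
  then show ?thesis using IG_lmult[OF IG_commutator'[OF star_bar]] by simp
qed

lemma bar_mult_commutator:
  "bar (y * (A * B - B * A)) - (- 2) * dotp (brk (vecp A) (vecp B)) (vecp y) \<in> IG"
proof -
  define W where "W = vecp A * vecp B - vecp B * vecp A"
  have W: "star W = - W" unfolding W_def by (simp add: star_diff star_mult star_vecp)
  have "bar (y * (A * B - B * A)) - bar (y * W) \<in> IG"
    using bar_cong IG_lmult[OF commutator_vector_parts, of y] unfolding W_def
    by (metis right_diff_distrib)
  moreover have "(- 2) * dotp (brk (vecp A) (vecp B)) (vecp y) = one_half * (vecp y * W + W * vecp y)"
  proof -
    have "vecp y * (one_half * W) = one_half * (vecp y * W)"
      by (metis mult.assoc one_half_central)
    then have "dotp (brk (vecp A) (vecp B)) (vecp y) = - (one_half * (one_half * (vecp y * W + W * vecp y)))"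
      unfolding dotp_def brk_def half_eq_one_half_mult W_def[symmetric]
      by (simp add: distrib_left mult.assoc add.commute)
    then show ?thesis by (simp add: two_mult_one_half)
  qed
  ultimately show ?thesis using IG_add bar_mult_antisym[OF W, of y] by fastforce
qed

lemma grp_mult: "grp g * grp h = (grp (g + h) :: ('g::group_add, 'k::field_char_0) grpalg)"
  unfolding grp_def by (simp add: mult_single)

lemma grp_zero: "grp 0 = (1 :: ('g::group_add, 'k::field_char_0) grpalg)"
  unfolding grp_def by simp

text \<open>The generators of {a^-1 b^-1 a b}^# are, modulo IG, -2 times generators of
  the right-hand ideal: apply the previous lemma with y = x b^-1 a^-1.\<close>
lemma Lsharp_generator_congruence:
  fixes a b :: "'g::group_add" and x :: "('g, 'k::field_char_0) grpalg"
  shows "bar (x * grp (- a + - b + a + b)) - bar x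
     - (- 2) * dotp (brk (vecp (grp a)) (vecp (grp b))) (vecp (x * grp (-a) * grp (-b))) \<in> IG"
proof -
  define y where "y = x * grp (-a) * grp (-b)"
  have "y * grp a * grp b = x * grp (- a + - b + a + b)"
    unfolding y_def by (simp add: mult.assoc grp_mult add.assoc)
  moreover have "y * grp b * grp a = x"
    unfolding y_def by (simp add: mult.assoc grp_mult add.assoc grp_zero)
  ultimately have "bar (x * grp (- a + - b + a + b)) - bar x = bar (y * (grp a * grp b - grp b * grp a))"
    unfolding bar_diff by (simp add: right_diff_distrib mult.assoc)
  then show ?thesis using bar_mult_commutator[of y "grp a" "grp b"] unfolding y_def by simp
qed

lemma Lsharp_commutator_subset:
  fixes a b :: "'g::group_add"
  shows "(Lsharp {- a + - b + a + b} :: ('g, 'k::field_char_0) grpalg set set)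
         \<subseteq> sharp_ideal {dotp (brk (vecp (grp a)) (vecp (grp b))) c | c. c \<in> AntiRep}"
  unfolding Lsharp_def
proof (rule sharp_ideal_mono, intro ballI)
  fix s :: "('g, 'k) grpalg" assume "s \<in> {bar (x * grp l) - bar x | x l. l \<in> {- a + - b + a + b}}"
  then obtain x where s: "s = bar (x * grp (- a + - b + a + b)) - bar x" by blast
  have "(- 2 :: ('g, 'k) grpalg) \<in> SymRep"
    unfolding SymRep_def by (simp add: star_uminus star_two)
  moreover have "vecp (x * grp (-a) * grp (-b)) \<in> AntiRep"
    unfolding AntiRep_def by (simp add: star_vecp)
  ultimately show "\<exists>r s'. r \<in> SymRep
      \<and> s' \<in> {dotp (brk (vecp (grp a)) (vecp (grp b))) c | c. c \<in> AntiRep} \<and> s - r * s' \<in> IG"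
    using Lsharp_generator_congruence[of x a b] unfolding s by blast
qed

lemma commutator_subset_Lsharp:
  fixes a b :: "'g::group_add"
  shows "sharp_ideal {dotp (brk (vecp (grp a)) (vecp (grp b))) c | c. c \<in> AntiRep}
         \<subseteq> (Lsharp {- a + - b + a + b} :: ('g, 'k::field_char_0) grpalg set set)"
  unfolding Lsharp_def
proof (rule sharp_ideal_mono, intro ballI)
  define w :: "('g, 'k) grpalg" where "w = brk (vecp (grp a)) (vecp (grp b))"
  fix s :: "('g, 'k) grpalg" assume "s \<in> {dotp (brk (vecp (grp a)) (vecp (grp b))) c | c. c \<in> AntiRep}"
  then obtain c where s: "s = dotp w c" and c: "c \<in> AntiRep" unfolding w_def by blast
  define x where "x = c * grp b * grp a"
  define s' where "s' = bar (x * grp (- a + - b + a + b)) - bar x"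
  have "x * grp (-a) * grp (-b) = c"
    unfolding x_def by (simp add: mult.assoc grp_mult add.assoc grp_zero)
  then have "s' - (- 2) * dotp w (vecp c) \<in> IG"
    using Lsharp_generator_congruence[of x a b] unfolding s'_def w_def by simp
  moreover have "s - (- one_half) * s'
      = (dotp w c - dotp w (vecp c)) + one_half * (s' - (- 2) * dotp w (vecp c))"
    unfolding s by (simp add: algebra_simps one_half_mult_double one_half_mult_two)
  ultimately have "s - (- one_half) * s' \<in> IG"
    using IG_add dotp_cong_right[OF AntiRep_vecp[OF c]] IG_lmult by metis
  moreover have "(- one_half :: ('g, 'k) grpalg) \<in> SymRep"
    unfolding SymRep_def by (simp add: star_uminus)
  ultimately show "\<exists>r s'. r \<in> SymRep
      \<and> s' \<in> {bar (x * grp l) - bar x | x l. l \<in> {- a + - b + a + b}} \<and> s - r * s' \<in> IG"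
    unfolding s'_def by blast
qed

theorem mainTheorem12:
  fixes a b :: "'g::group_add"
  shows "(Lsharp {- a + - b + a + b} :: ('g, 'k::field_char_0) grpalg set set)
         = sharp_ideal {dotp (brk (vecp (grp a)) (vecp (grp b))) c | c. c \<in> AntiRep}"
  using Lsharp_commutator_subset commutator_subset_Lsharp by (rule subset_antisym)

end
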